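(* Let $0<p<1$. Let $X_1,X_2,\ldots$ be i.i.d. random variables with values in $\{0,1,a\}$ such that $P(X_1=a)=p$ and $P(X_1=0)=P(X_1=1)=\frac{1-p}{2}$. Let $Y_1,Y_2,\ldots$ be i.i.d. Bernoulli random variables with parameter $1/2$ (values in $\{0,1\}$), independent of $(X_i)_{i\in\mathbb{N}}$. Let $L_n$ be the length of a longest common subsequence of $X_1X_2\ldots X_n$ and $Y_1Y_2\ldots Y_n$. Then there exists a constant $k>0$, not depending on $n$, such that for all $n\in\mathbb{N}$, $$\mathrm{Var}[L_n]\geq k\cdot n.$$
   Context: A common subsequence of two finite words is a word that is a subsequence (not necessarily contiguous) of both. *)

theory Defs
  imports "HOL-Probability.Probability" "HOL-Library.Sublist"
begin

datatype letter = Zero | One | A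

definition common_subseq :: "'a list \<Rightarrow> 'a list \<Rightarrow> 'a list \<Rightarrow> bool" where
  "common_subseq zs xs ys \<longleftrightarrow> subseq zs xs \<and> subseq zs ys"

definition lcs_length :: "'a list \<Rightarrow> 'a list \<Rightarrow> nat" where
  "lcs_length xs ys = Max (length ` {zs. common_subseq zs xs ys})"

end

theory Submission
  imports Defs
begin

text \<open>
  Let N be the number of letters a in X_1 ... X_n. Since a never occurs in Y, deleting an a from
  X does not change L_n. Writing E(m, k) for the expected LCS length of the first m letters of X
  and the first k letters of Y, this gives E[L_n N] = n p E(n - 1, n), hence
  Cov(L_n, N) = - n p Delta with Delta = E(n, n) - E(n - 1, n), and Cauchy-Schwarz against N,
  whose variance is n p (1 - p), yields Var L_n >= n p Delta^2 / (1 - p).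

  Appending a letter to X gains at least 1 - (L(X, Y y) - L(X, Y)) when it equals the last
  letter y of Y, so Delta >= (1 - p) / 2 * (1 - delta) with delta = E(n - 1, n) - E(n - 1, n - 1).
  LCS lengths satisfy the Monge inequality L(U, P Z S) + L(U, Z) <= L(U, P Z) + L(U, Z S), so
  k -> E(m, k) is concave; it vanishes at 0 and is at most m (1 - p), whence delta <= 1 - p.
  Altogether Delta >= p (1 - p) / 2 and Var L_n >= p^3 (1 - p) n / 4.
\<close>

section \<open>Longest common subsequences\<close>

lemma finite_lcs_lengths: "finite (length ` {zs. common_subseq zs xs ys})"
proof (rule finite_subset)
  show "length ` {zs. common_subseq zs xs ys} \<subseteq> {..length xs}"
    by (auto simp: common_subseq_def dest: list_emb_length)
qed simp

lemma length_le_lcs_length: "common_subseq zs xs ys \<Longrightarrow> length zs \<le> lcs_length xs ys"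
  unfolding lcs_length_def using finite_lcs_lengths by (intro Max_ge) auto

lemma obtain_longest_common_subseq:
  obtains zs where "common_subseq zs xs ys" "length zs = lcs_length xs ys"
proof -
  have "common_subseq [] xs ys" by (simp add: common_subseq_def)
  then have "length ` {zs. common_subseq zs xs ys} \<noteq> {}" by blast
  from Max_in[OF finite_lcs_lengths this] show ?thesis
    using that unfolding lcs_length_def by auto
qed

lemma lcs_length_le_length: "lcs_length xs ys \<le> length xs"
  by (metis obtain_longest_common_subseq common_subseq_def list_emb_length)

lemma lcs_length_commute: "lcs_length xs ys = lcs_length ys xs"
proof -
  have "lcs_length xs ys \<le> lcs_length ys xs" for xs ys :: "'a list"
    by (metis obtain_longest_common_subseq common_subseq_def length_le_lcs_length)
  then show ?thesis by (simp add: le_antisym)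
qed

lemma lcs_length_Nil_left [simp]: "lcs_length [] ys = 0"
  using lcs_length_le_length[of "[]" ys] by simp

lemma lcs_length_Nil_right [simp]: "lcs_length xs [] = 0"
  using lcs_length_commute[of xs "[]"] by simp

lemma lcs_length_mono_right: "subseq ys ys' \<Longrightarrow> lcs_length xs ys \<le> lcs_length xs ys'"
  by (metis obtain_longest_common_subseq common_subseq_def length_le_lcs_length subseq_order.trans)

lemma lcs_length_mono_left: "subseq xs xs' \<Longrightarrow> lcs_length xs ys \<le> lcs_length xs' ys"
  using lcs_length_mono_right[of xs xs' ys] by (simp add: lcs_length_commute)

primrec after_first :: "'a \<Rightarrow> 'a list \<Rightarrow> 'a list" where
  "after_first q [] = []"
| "after_first q (x # V) = (if x = q then V else after_first q V)"

lemma after_first_append: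
  "after_first q (V @ W) = (if q \<in> set V then after_first q V @ W else after_first q W)"
  by (induction V) auto

lemma subseq_Cons_iff_after_first:
  "subseq (q # zs) V \<longleftrightarrow> q \<in> set V \<and> subseq zs (after_first q V)"
  by (induction V) auto

lemma lcs_length_Cons:
  "lcs_length (q # U) V =
    (if q \<in> set V then max (lcs_length U V) (Suc (lcs_length U (after_first q V)))
     else lcs_length U V)" (is "_ = ?rhs")
proof (rule antisym)
  obtain zs where zs: "common_subseq zs (q # U) V" "length zs = lcs_length (q # U) V"
    using obtain_longest_common_subseq by blast
  show "lcs_length (q # U) V \<le> ?rhs"
  proof (cases "subseq zs U")
    case True
    then have "length zs \<le> lcs_length U V"
      using zs by (intro length_le_lcs_length) (auto simp: common_subseq_def)
    then show ?thesis using zs by auto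
  next
    case False
    then obtain z zs' where zs_eq: "zs = z # zs'"
      by (metis list_emb_Nil neq_Nil_conv)
    have "subseq (z # zs') (q # U)"
      using zs zs_eq by (simp add: common_subseq_def)
    then have zs': "zs = q # zs'" "subseq zs' U"
      using False zs_eq by (simp_all split: if_split_asm)
    have "subseq (q # zs') V"
      using zs zs'(1) by (simp add: common_subseq_def)
    then have "q \<in> set V" "subseq zs' (after_first q V)"
      by (simp_all add: subseq_Cons_iff_after_first)
    moreover from this have "length zs' \<le> lcs_length U (after_first q V)"
      using zs' by (intro length_le_lcs_length) (simp add: common_subseq_def)
    ultimately show ?thesis using zs zs' by auto
  qed
next
  have "lcs_length U V \<le> lcs_length (q # U) V"
    by (intro lcs_length_mono_left list_emb_Cons) simp
  moreover have "Suc (lcs_length U (after_first q V)) \<le> lcs_length (q # U) V" if "q \<in> set V"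
  proof -
    obtain zs where "common_subseq zs U (after_first q V)"
        "length zs = lcs_length U (after_first q V)"
      using obtain_longest_common_subseq by blast
    with that show ?thesis
      using length_le_lcs_length[of "q # zs" "q # U" V]
      by (simp add: common_subseq_def subseq_Cons_iff_after_first)
  qed
  ultimately show "?rhs \<le> lcs_length (q # U) V" by auto
qed

(* Induction on the first word q # U: by lcs_length_Cons each of the four terms is lcs_length U of
   the word itself or one more than lcs_length U of its part after the first q. Splitting at the
   first occurrence of q in Z, P or S reduces the claim to instances of the induction hypothesis. *)
lemma lcs_length_Monge:
  "lcs_length U (P @ Z @ S) + lcs_length U Z \<le> lcs_length U (P @ Z) + lcs_length U (Z @ S)"
proof (induction U arbitrary: P Z S)
  case (Cons q U)
  have mono: "lcs_length U Z \<le> lcs_length U (P @ Z)"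
    by (rule lcs_length_mono_right) (simp add: subseq_drop_many)
  note IH = Cons.IH[of P Z S]
  show ?case
  proof (cases "q \<in> set Z")
    case True
    then obtain Z0 Z' where Z: "Z = Z0 @ q # Z'" "q \<notin> set Z0"
      by (meson split_list_first)
    note IH' = Cons.IH[of "P @ Z0 @ [q]" Z' S]
    show ?thesis
    proof (cases "q \<in> set P")
      case True
      then obtain P0 P' where "P = P0 @ q # P'" "q \<notin> set P0"
        by (meson split_list_first)
      then show ?thesis
        using IH IH' Cons.IH[of P' Z S] Cons.IH[of "P' @ Z0 @ [q]" Z' S] Z
        by (simp add: lcs_length_Cons after_first_append)
    next
      case False
      then show ?thesis
        using IH IH' mono Z by (simp add: lcs_length_Cons after_first_append)
    qed
  next
    case False
    show ?thesis
    proof (cases "q \<in> set P")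
      case True
      then obtain P0 P' where "P = P0 @ q # P'" "q \<notin> set P0"
        by (meson split_list_first)
      then show ?thesis
        using IH Cons.IH[of P' Z S] False
        by (auto simp add: lcs_length_Cons after_first_append)
    next
      case False
      then show ?thesis
        using IH mono \<open>q \<notin> set Z\<close> by (auto simp add: lcs_length_Cons after_first_append)
    qed
  qed
qed simp

lemma lcs_length_snoc_snoc: "Suc (lcs_length xs ys) \<le> lcs_length (xs @ [b]) (ys @ [b])"
proof -
  obtain zs where "common_subseq zs xs ys" "length zs = lcs_length xs ys"
    using obtain_longest_common_subseq by blast
  then show ?thesis
    using length_le_lcs_length[of "zs @ [b]" "xs @ [b]" "ys @ [b]"] by (simp add: common_subseq_def)
qed

lemma lcs_length_filter_absent:
  assumes "c \<notin> set ys"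
  shows "lcs_length (filter (\<lambda>x. x \<noteq> c) xs) ys = lcs_length xs ys"
proof (rule antisym)
  show "lcs_length (filter (\<lambda>x. x \<noteq> c) xs) ys \<le> lcs_length xs ys"
    by (rule lcs_length_mono_left) simp
  obtain zs where zs: "common_subseq zs xs ys" "length zs = lcs_length xs ys"
    using obtain_longest_common_subseq by blast
  then have "c \<notin> set zs"
    using assms by (auto simp: common_subseq_def dest: list_emb_set)
  then have "filter (\<lambda>x. x \<noteq> c) zs = zs"
    by (auto simp: filter_id_conv)
  then have "common_subseq zs (filter (\<lambda>x. x \<noteq> c) xs) ys"
    using zs subseq_filter[of zs xs "\<lambda>x. x \<noteq> c"] by (simp add: common_subseq_def)
  then show "lcs_length xs ys \<le> lcs_length (filter (\<lambda>x. x \<noteq> c) xs) ys"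
    using zs length_le_lcs_length by metis
qed

lemma lcs_length_remove_absent:
  "c \<notin> set ys \<Longrightarrow> lcs_length (as @ c # bs) ys = lcs_length (as @ bs) ys"
  using lcs_length_filter_absent[of c ys "as @ c # bs"] lcs_length_filter_absent[of c ys "as @ bs"]
  by simp

lemma lcs_length_add_count_le:
  assumes "c \<notin> set ys"
  shows "lcs_length xs ys + count_list xs c \<le> length xs"
proof -
  have "count_list xs c = length (filter (\<lambda>x. x = c) xs)"
    by (induction xs) auto
  then have "length (filter (\<lambda>x. x \<noteq> c) xs) + count_list xs c = length xs"
    using sum_length_filter_compl[of "\<lambda>x. x \<noteq> c" xs] by simp
  then show ?thesis
    using lcs_length_filter_absent[OF assms, of xs]
      lcs_length_le_length[of "filter (\<lambda>x. x \<noteq> c) xs" ys]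
    by linarith
qed

section \<open>Expectations over words with independent letters\<close>

definition word_expectation :: "('a::finite \<Rightarrow> real) \<Rightarrow> nat \<Rightarrow> ('a list \<Rightarrow> real) \<Rightarrow> real" where
  "word_expectation w n F = (\<Sum>xs | length xs = n. prod_list (map w xs) * F xs)"

lemma finite_lists_of_length: "finite {xs :: 'a::finite list. length xs = n}"
  using finite_lists_length_eq[of "UNIV :: 'a set" n] by simp

lemma lists_of_length_add:
  "{xs. length xs = m + k} = (\<lambda>(as, bs). as @ bs) ` ({as. length as = m} \<times> {bs. length bs = k})"
proof (intro equalityI subsetI)
  fix xs :: "'a list"
  assume "xs \<in> {xs. length xs = m + k}"
  then have "(take m xs, drop m xs) \<in> {as. length as = m} \<times> {bs. length bs = k}" by simp
  then show "xs \<in> (\<lambda>(as, bs). as @ bs) ` ({as. length as = m} \<times> {bs. length bs = k})"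
    by (rule rev_image_eqI) simp
qed auto

lemma word_expectation_append:
  "word_expectation w (m + k) F =
    word_expectation w m (\<lambda>as. word_expectation w k (\<lambda>bs. F (as @ bs)))"
proof -
  have inj: "inj_on (\<lambda>(as, bs). as @ bs) ({as. length as = m} \<times> {bs. length bs = k})"
    by (auto simp: inj_on_def)
  have "word_expectation w (m + k) F =
      (\<Sum>(as, bs) \<in> {as. length as = m} \<times> {bs. length bs = k}.
         prod_list (map w (as @ bs)) * F (as @ bs))"
    unfolding word_expectation_def lists_of_length_add
    by (subst sum.reindex[OF inj]) (simp add: case_prod_beta)
  also have "\<dots> = (\<Sum>as | length as = m. \<Sum>bs | length bs = k.
      prod_list (map w as) * (prod_list (map w bs) * F (as @ bs)))"
    by (subst sum.cartesian_product[symmetric]) (simp add: mult.assoc)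
  finally show ?thesis
    by (simp add: word_expectation_def sum_distrib_left)
qed

lemma word_expectation_0 [simp]: "word_expectation w 0 F = F []"
  by (simp add: word_expectation_def)

lemma word_expectation_1: "word_expectation w (Suc 0) F = (\<Sum>c\<in>UNIV. w c * F [c])"
proof -
  have words_1: "{xs. length xs = Suc 0} = (\<lambda>c. [c]) ` UNIV"
    by (auto simp: length_Suc_conv)
  show ?thesis
    unfolding word_expectation_def words_1 by (subst sum.reindex) (auto simp: inj_on_def)
qed

lemma word_expectation_Suc_Cons:
  "word_expectation w (Suc n) F = (\<Sum>c\<in>UNIV. w c * word_expectation w n (\<lambda>xs. F (c # xs)))"
  using word_expectation_append[of w 1 n F] by (simp add: word_expectation_1)

lemma word_expectation_Suc_snoc:
  "word_expectation w (Suc n) F = word_expectation w n (\<lambda>xs. \<Sum>c\<in>UNIV. w c * F (xs @ [c]))"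
  using word_expectation_append[of w n 1 F] by (simp add: word_expectation_1)

lemma word_expectation_add:
  "word_expectation w n (\<lambda>x. F x + G x) = word_expectation w n F + word_expectation w n G"
  by (simp add: word_expectation_def sum.distrib algebra_simps)

lemma word_expectation_diff:
  "word_expectation w n (\<lambda>x. F x - G x) = word_expectation w n F - word_expectation w n G"
  by (simp add: word_expectation_def sum_subtractf algebra_simps)

lemma word_expectation_mult_left:
  "word_expectation w n (\<lambda>x. c * F x) = c * word_expectation w n F"
  unfolding word_expectation_def sum_distrib_left by (simp add: ac_simps)

lemma word_expectation_mult_right:
  "word_expectation w n (\<lambda>x. F x * c) = word_expectation w n F * c"
  unfolding word_expectation_def sum_distrib_right by (simp add: ac_simps)

lemma word_expectation_sum:
  "word_expectation w n (\<lambda>x. \<Sum>i\<in>I. F i x) = (\<Sum>i\<in>I. word_expectation w n (F i))"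
  unfolding word_expectation_def by (simp add: sum_distrib_left sum.swap[of _ I])

lemmas word_expectation_linear =
  word_expectation_add word_expectation_diff word_expectation_mult_left
  word_expectation_mult_right word_expectation_sum

lemma word_expectation_const: "sum w UNIV = 1 \<Longrightarrow> word_expectation w n (\<lambda>_. c) = c"
  by (induction n) (simp_all add: word_expectation_Suc_Cons flip: sum_distrib_right)

lemma word_expectation_cong:
  assumes "\<And>xs. length xs = n \<Longrightarrow> \<forall>x\<in>set xs. w x \<noteq> 0 \<Longrightarrow> F xs = G xs"
  shows "word_expectation w n F = word_expectation w n G"
  unfolding word_expectation_def
  by (intro sum.cong refl) (use assms in \<open>force simp: prod_list_zero_iff\<close>)

lemma word_expectation_mono:
  assumes "\<And>c. 0 \<le> w c"
    and "\<And>xs. length xs = n \<Longrightarrow> \<forall>x\<in>set xs. w x \<noteq> 0 \<Longrightarrow> F xs \<le> G xs"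
  shows "word_expectation w n F \<le> word_expectation w n G"
  unfolding word_expectation_def
proof (intro sum_mono)
  fix xs :: "'a list"
  assume "xs \<in> {xs. length xs = n}"
  show "prod_list (map w xs) * F xs \<le> prod_list (map w xs) * G xs"
  proof (cases "\<forall>x\<in>set xs. w x \<noteq> 0")
    case True
    moreover have "0 \<le> prod_list (map w xs)"
      using assms(1) by (intro prod_list_nonneg) auto
    ultimately show ?thesis
      using assms(2) \<open>xs \<in> {xs. length xs = n}\<close> by (simp add: mult_left_mono)
  next
    case False
    then have "prod_list (map w xs) = 0"
      by (force simp: prod_list_zero_iff)
    then show ?thesis by simp
  qed
qed

definition prob_weights :: "('a::finite \<Rightarrow> real) \<Rightarrow> bool" where
  "prob_weights w \<longleftrightarrow> (\<forall>c. 0 \<le> w c) \<and> sum w UNIV = 1"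

lemma prob_weights_le_1:
  assumes "prob_weights w"
  shows "w c \<le> 1"
  using assms member_le_sum[of c UNIV w] by (auto simp: prob_weights_def)

lemma sum_weights_add_const:
  fixes w :: "'a::finite \<Rightarrow> real"
  assumes "sum w UNIV = 1"
  shows "(\<Sum>c\<in>UNIV. w c * (G c + b)) = (\<Sum>c\<in>UNIV. w c * G c) + b"
proof -
  have "(\<Sum>c\<in>UNIV. w c * (G c + b)) = (\<Sum>c\<in>UNIV. w c * G c) + sum w UNIV * b"
    by (simp add: distrib_left sum.distrib sum_distrib_right)
  then show ?thesis using assms by simp
qed

lemma sum_weights_indicator:
  fixes w :: "'a::finite \<Rightarrow> real"
  assumes "sum w UNIV = 1"
  shows "(\<Sum>d\<in>UNIV. w d * (a + b * (if d = c then 1 else 0))) = a + b * w c"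
proof -
  have "(\<Sum>d\<in>UNIV. w d * (b * (if d = c then 1 else 0))) = (\<Sum>d\<in>UNIV. if d = c then b * w c else 0)"
    by (intro sum.cong) (auto simp: mult.commute)
  then show ?thesis
    using sum_weights_add_const[OF assms, of "\<lambda>d. b * (if d = c then 1 else 0)" a]
    by (simp add: add.commute)
qed

lemma word_expectation_count:
  assumes "sum w UNIV = 1"
  shows "word_expectation w n (\<lambda>xs. real (count_list xs c)) = real n * w c"
proof (induction n)
  case (Suc n)
  have step: "real (count_list (xs @ [d]) c)
      = real (count_list xs c) + 1 * (if d = c then 1 else 0)" for xs d
    by simp
  have "word_expectation w (Suc n) (\<lambda>xs. real (count_list xs c)) =
      word_expectation w n (\<lambda>xs. real (count_list xs c) + 1 * w c)"
    unfolding word_expectation_Suc_snoc step sum_weights_indicator[OF assms] ..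
  also have "\<dots> = real n * w c + 1 * w c"
    by (simp only: word_expectation_add word_expectation_const[OF assms] Suc.IH)
  finally show ?case by (simp add: algebra_simps)
qed simp

lemma word_expectation_count_variance:
  assumes "sum w UNIV = 1"
  shows "word_expectation w n (\<lambda>xs. (real (count_list xs c) - real n * w c)\<^sup>2)
    = real n * w c * (1 - w c)"
proof (induction n)
  case (Suc n)
  have step: "(real (count_list (xs @ [d]) c) - real (Suc n) * w c)\<^sup>2 =
      (real (count_list xs c) - real n * w c - w c)\<^sup>2
      + (2 * (real (count_list xs c) - real n * w c - w c) + 1) * (if d = c then 1 else 0)" for xs d
    by (simp add: power2_eq_square algebra_simps)
  have "word_expectation w (Suc n) (\<lambda>xs. (real (count_list xs c) - real (Suc n) * w c)\<^sup>2) =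
      word_expectation w n (\<lambda>xs. (real (count_list xs c) - real n * w c)\<^sup>2 + w c * (1 - w c))"
    unfolding word_expectation_Suc_snoc step sum_weights_indicator[OF assms]
    by (simp add: power2_eq_square algebra_simps)
  also have "\<dots> = real n * w c * (1 - w c) + w c * (1 - w c)"
    by (simp only: word_expectation_add word_expectation_const[OF assms] Suc.IH)
  finally show ?case by (simp add: algebra_simps)
qed simp

lemma sum_weights_Monge:
  fixes w :: "'a::finite \<Rightarrow> real"
  assumes "prob_weights w" and "\<And>c d. G c d + b \<le> H c + K d"
  shows "(\<Sum>c\<in>UNIV. w c * (\<Sum>d\<in>UNIV. w d * G c d)) + b
    \<le> (\<Sum>c\<in>UNIV. w c * H c) + (\<Sum>d\<in>UNIV. w d * K d)"
proof -
  have w1: "sum w UNIV = 1" and w0: "\<And>c. 0 \<le> w c"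
    using assms(1) by (auto simp: prob_weights_def)
  have "(\<Sum>d\<in>UNIV. w d * G c d) + b \<le> H c + (\<Sum>d\<in>UNIV. w d * K d)" for c
  proof -
    have "(\<Sum>d\<in>UNIV. w d * G c d) + b = (\<Sum>d\<in>UNIV. w d * (G c d + b))"
      by (rule sum_weights_add_const[OF w1, symmetric])
    also have "\<dots> \<le> (\<Sum>d\<in>UNIV. w d * (K d + H c))"
      using assms(2) w0 by (intro sum_mono mult_left_mono) (auto simp: add.commute)
    also have "\<dots> = (\<Sum>d\<in>UNIV. w d * K d) + H c"
      by (rule sum_weights_add_const[OF w1])
    finally show ?thesis by simp
  qed
  then have "(\<Sum>c\<in>UNIV. w c * ((\<Sum>d\<in>UNIV. w d * G c d) + b))
      \<le> (\<Sum>c\<in>UNIV. w c * (H c + (\<Sum>d\<in>UNIV. w d * K d)))"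
    using w0 by (intro sum_mono mult_left_mono) auto
  then show ?thesis
    by (simp add: sum_weights_add_const[OF w1])
qed

lemma word_expectation_concave:
  assumes "prob_weights w"
    and "\<And>c d ws. F (c # ws @ [d]) + F ws \<le> F (c # ws) + F (ws @ [d])"
  shows "word_expectation w (Suc (Suc n)) F + word_expectation w n F
    \<le> 2 * word_expectation w (Suc n) F"
proof -
  let ?first = "\<lambda>ws. \<Sum>c\<in>UNIV. w c * F (c # ws)"
  let ?last = "\<lambda>ws. \<Sum>d\<in>UNIV. w d * F (ws @ [d])"
  let ?both = "\<lambda>ws. \<Sum>c\<in>UNIV. w c * (\<Sum>d\<in>UNIV. w d * F (c # ws @ [d]))"
  have "word_expectation w (Suc (Suc n)) F = word_expectation w n ?both"
    by (simp only: word_expectation_Suc_Cons[of w "Suc n"] word_expectation_Suc_snoc[of w n])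
      (simp add: word_expectation_linear)
  then have "word_expectation w (Suc (Suc n)) F + word_expectation w n F
      = word_expectation w n (\<lambda>ws. ?both ws + F ws)"
    by (simp add: word_expectation_add)
  also have "\<dots> \<le> word_expectation w n (\<lambda>ws. ?first ws + ?last ws)"
    using assms by (intro word_expectation_mono sum_weights_Monge) (auto simp: prob_weights_def)
  also have "\<dots> = 2 * word_expectation w (Suc n) F"
  proof -
    have "word_expectation w (Suc n) F = word_expectation w n ?first"
      by (simp add: word_expectation_Suc_Cons word_expectation_linear)
    moreover have "word_expectation w (Suc n) F = word_expectation w n ?last"
      by (rule word_expectation_Suc_snoc)
    ultimately show ?thesis
      by (simp add: word_expectation_add)
  qed
  finally show ?thesis .
qed

lemma count_list_eq_sum_nth: "real (count_list xs c) = (\<Sum>i<length xs. if xs ! i = c then 1 else 0)"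
proof -
  have "count_list xs c = card {i. i < length xs \<and> xs ! i = c}"
    by (simp add: count_list_eq_length_filter length_filter_conv_card eq_commute)
  then show ?thesis
    by (simp add: sum.If_cases lessThan_def Collect_conj_eq Int_commute)
qed

lemma word_expectation_count_mult:
  assumes drop_c: "\<And>as bs. F (as @ c # bs) = F (as @ bs)"
  shows "word_expectation w (Suc m) (\<lambda>xs. real (count_list xs c) * F xs)
    = real (Suc m) * w c * word_expectation w m F"
proof -
  have at_i: "word_expectation w (Suc m) (\<lambda>xs. (if xs ! i = c then 1 else 0) * F xs)
      = w c * word_expectation w m F" if "i < Suc m" for i
  proof -
    have delta: "(\<Sum>d\<in>UNIV. w d * ((if d = c then 1 else 0) * G d)) = w c * G c" for G
    proof -
      have "(\<Sum>d\<in>UNIV. w d * ((if d = c then 1 else 0) * G d))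
          = (\<Sum>d\<in>UNIV. if d = c then w c * G c else 0)"
        by (intro sum.cong) auto
      then show ?thesis by simp
    qed
    obtain k where m: "m = i + k"
      using \<open>i < Suc m\<close> by (metis less_Suc_eq_le le_Suc_ex)
    have "word_expectation w (Suc m) (\<lambda>xs. (if xs ! i = c then 1 else 0) * F xs)
        = word_expectation w i (\<lambda>as. word_expectation w (Suc k)
            (\<lambda>bs. (if (as @ bs) ! i = c then 1 else 0) * F (as @ bs)))"
      using word_expectation_append[of w i "Suc k"] m by simp
    also have "\<dots> = word_expectation w i (\<lambda>as. w c * word_expectation w k (\<lambda>bs. F (as @ c # bs)))"
      by (intro word_expectation_cong)
        (simp add: word_expectation_Suc_Cons nth_append word_expectation_mult_left delta)
    also have "\<dots> = w c * word_expectation w m F"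
      using word_expectation_append[of w i k F] m by (simp add: drop_c word_expectation_mult_left)
    finally show ?thesis .
  qed
  have "word_expectation w (Suc m) (\<lambda>xs. real (count_list xs c) * F xs)
      = word_expectation w (Suc m) (\<lambda>xs. \<Sum>i<Suc m. (if xs ! i = c then 1 else 0) * F xs)"
    by (intro word_expectation_cong) (simp only: count_list_eq_sum_nth sum_distrib_right)
  also have "\<dots> = (\<Sum>i<Suc m. w c * word_expectation w m F)"
    unfolding word_expectation_sum by (intro sum.cong refl at_i) simp
  also have "\<dots> = real (Suc m) * w c * word_expectation w m F"
    by simp
  finally show ?thesis .
qed

section \<open>The expected length of a longest common subsequence\<close>

definition joint_expectation ::
  "('a::finite \<Rightarrow> real) \<Rightarrow> ('b::finite \<Rightarrow> real) \<Rightarrow> nat \<Rightarrow> nat \<Rightarrow> ('a list \<Rightarrow> 'b list \<Rightarrow> real) \<Rightarrow> real"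
  where "joint_expectation u v m n f = word_expectation u m (\<lambda>xs. word_expectation v n (f xs))"

lemma joint_expectation_eq_sum:
  "joint_expectation u v m n f =
    (\<Sum>(xs, ys) \<in> {xs. length xs = m} \<times> {ys. length ys = n}.
       prod_list (map u xs) * prod_list (map v ys) * f xs ys)"
  unfolding joint_expectation_def word_expectation_def sum.cartesian_product[symmetric]
  by (simp add: sum_distrib_left mult.assoc)

lemma joint_expectation_Cauchy_Schwarz:
  assumes "\<And>c. 0 \<le> u c" and "\<And>c. 0 \<le> v c"
  shows "(joint_expectation u v m n (\<lambda>xs ys. a xs ys * b xs ys))\<^sup>2
    \<le> joint_expectation u v m n (\<lambda>xs ys. (a xs ys)\<^sup>2)
      * joint_expectation u v m n (\<lambda>xs ys. (b xs ys)\<^sup>2)"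
proof -
  define W where "W = (\<lambda>(xs, ys). prod_list (map u xs) * prod_list (map v ys))"
  have W: "0 \<le> W z" for z
    using assms by (auto simp: W_def case_prod_beta intro!: mult_nonneg_nonneg prod_list_nonneg)
  have sum_W: "joint_expectation u v m n f =
      (\<Sum>z \<in> {xs. length xs = m} \<times> {ys. length ys = n}. W z * f (fst z) (snd z))" for f
    by (simp add: joint_expectation_eq_sum W_def case_prod_beta)
  have prod: "sqrt (W z) * x * (sqrt (W z) * y) = W z * (x * y)" for z x y
  proof -
    have "sqrt (W z) * x * (sqrt (W z) * y) = (sqrt (W z))\<^sup>2 * (x * y)"
      by (simp add: power2_eq_square mult_ac)
    then show ?thesis using W[of z] by simp
  qed
  have square: "(sqrt (W z) * x)\<^sup>2 = W z * x\<^sup>2" for z x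
    using W[of z] by (simp add: power_mult_distrib)
  from Cauchy_Schwarz_ineq_sum[of "\<lambda>z. sqrt (W z) * a (fst z) (snd z)"
      "\<lambda>z. sqrt (W z) * b (fst z) (snd z)" "{xs. length xs = m} \<times> {ys. length ys = n}"]
  show ?thesis
    unfolding sum_W prod square .
qed

abbreviation expected_lcs :: "('a::finite \<Rightarrow> real) \<Rightarrow> ('a \<Rightarrow> real) \<Rightarrow> nat \<Rightarrow> nat \<Rightarrow> real" where
  "expected_lcs u v m n \<equiv> joint_expectation u v m n (\<lambda>xs ys. real (lcs_length xs ys))"

lemma expected_lcs_Nil_right [simp]: "expected_lcs u v m 0 = 0"
  by (simp add: joint_expectation_def word_expectation_def)

lemma expected_lcs_concave:
  assumes "\<And>c. 0 \<le> u c" and "prob_weights v"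
  shows "expected_lcs u v m (Suc (Suc n)) + expected_lcs u v m n \<le> 2 * expected_lcs u v m (Suc n)"
proof -
  have "expected_lcs u v m (Suc (Suc n)) + expected_lcs u v m n
      = word_expectation u m (\<lambda>xs. word_expectation v (Suc (Suc n)) (\<lambda>ys. real (lcs_length xs ys))
          + word_expectation v n (\<lambda>ys. real (lcs_length xs ys)))"
    by (simp add: joint_expectation_def word_expectation_add)
  also have "\<dots> \<le> word_expectation u m
      (\<lambda>xs. 2 * word_expectation v (Suc n) (\<lambda>ys. real (lcs_length xs ys)))"
  proof (intro word_expectation_mono word_expectation_concave)
    show "real (lcs_length xs (c # ws @ [d])) + real (lcs_length xs ws)
        \<le> real (lcs_length xs (c # ws)) + real (lcs_length xs (ws @ [d]))" for xs c d ws
      using lcs_length_Monge[of xs "[c]" ws "[d]"] by simp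
  qed (use assms in auto)
  also have "\<dots> = 2 * expected_lcs u v m (Suc n)"
    by (simp add: joint_expectation_def word_expectation_mult_left)
  finally show ?thesis .
qed

lemma concave_seq_increment_le:
  fixes g :: "nat \<Rightarrow> real"
  assumes "\<And>k. g (Suc (Suc k)) + g k \<le> 2 * g (Suc k)"
  shows "real (Suc j) * (g (Suc j) - g j) \<le> g (Suc j) - g 0"
proof -
  define d where "d k = g (Suc k) - g k" for k
  have "d (Suc k) \<le> d k" for k
    using assms[of k] by (simp add: d_def)
  then have "d j \<le> d k" if "k \<le> j" for k
    using that by (rule lift_Suc_antimono_le)
  then have "(\<Sum>k<Suc j. d j) \<le> (\<Sum>k<Suc j. d k)"
    by (intro sum_mono) simp
  also have "\<dots> = g (Suc j) - g 0"
    unfolding d_def by (rule sum_lessThan_telescope)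
  finally show ?thesis by (simp add: d_def)
qed

lemma expected_lcs_le:
  assumes u: "prob_weights u" and v: "prob_weights v" and "v c = 0"
  shows "expected_lcs u v m n \<le> real m * (1 - u c)"
proof -
  have u1: "sum u UNIV = 1" and v1: "sum v UNIV = 1" and u0: "\<And>c. 0 \<le> u c"
    using u v by (auto simp: prob_weights_def)
  have "expected_lcs u v m n
      \<le> word_expectation u m (\<lambda>xs. real (length xs) - real (count_list xs c))"
    unfolding joint_expectation_def
  proof (intro word_expectation_mono u0)
    fix xs :: "'a list"
    have "word_expectation v n (\<lambda>ys. real (lcs_length xs ys))
        \<le> word_expectation v n (\<lambda>_. real (length xs) - real (count_list xs c))"
      using \<open>v c = 0\<close> lcs_length_add_count_le[of c _ xs] v
      by (intro word_expectation_mono) (fastforce simp: prob_weights_def)+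
    then show "word_expectation v n (\<lambda>ys. real (lcs_length xs ys))
        \<le> real (length xs) - real (count_list xs c)"
      by (simp add: word_expectation_const[OF v1])
  qed
  also have "\<dots> = real m - real m * u c"
  proof -
    have "word_expectation u m (\<lambda>xs. real (length xs)) = word_expectation u m (\<lambda>_. real m)"
      by (rule word_expectation_cong) simp
    then show ?thesis
      by (simp add: word_expectation_diff word_expectation_count[OF u1]
          word_expectation_const[OF u1])
  qed
  finally show ?thesis by (simp add: algebra_simps)
qed

lemma expected_lcs_increment_le:
  assumes u: "prob_weights u" and v: "prob_weights v" and "v c = 0"
  shows "expected_lcs u v m (Suc m) - expected_lcs u v m m \<le> 1 - u c"
proof -
  have "real (Suc m) * (expected_lcs u v m (Suc m) - expected_lcs u v m m)
      \<le> expected_lcs u v m (Suc m)"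
    using concave_seq_increment_le[of "expected_lcs u v m" m] expected_lcs_concave[of u v m] u v
    by (simp add: prob_weights_def)
  also have "\<dots> \<le> real m * (1 - u c)"
    using expected_lcs_le[OF u v \<open>v c = 0\<close>] .
  also have "\<dots> \<le> real (Suc m) * (1 - u c)"
    using prob_weights_le_1[OF u, of c] by (intro mult_right_mono) auto
  finally show ?thesis by simp
qed

lemma lcs_length_snoc_gain:
  fixes u :: "'a::finite \<Rightarrow> real"
  assumes "prob_weights u"
  shows "u d * (1 + real (lcs_length zs ws) - real (lcs_length zs (ws @ [d])))
    \<le> (\<Sum>c\<in>UNIV. u c * real (lcs_length (zs @ [c]) (ws @ [d]))) - real (lcs_length zs (ws @ [d]))"
proof -
  let ?L = "\<lambda>xs. real (lcs_length xs (ws @ [d]))"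
  have u0: "\<And>c. 0 \<le> u c" and u1: "sum u UNIV = 1"
    using assms by (auto simp: prob_weights_def)
  have "?L zs \<le> ?L (zs @ [c])" for c
    by (simp add: lcs_length_mono_left subseq_rev_drop_many)
  then have gain_nonneg: "0 \<le> u c * (?L (zs @ [c]) - ?L zs)" for c
    using u0 by simp
  have "u d * (1 + real (lcs_length zs ws) - ?L zs) \<le> u d * (?L (zs @ [d]) - ?L zs)"
    using lcs_length_snoc_snoc[of zs ws d] u0 by (intro mult_left_mono) auto
  also have "\<dots> \<le> (\<Sum>c\<in>UNIV. u c * (?L (zs @ [c]) - ?L zs))"
    by (rule member_le_sum) (auto intro: gain_nonneg)
  also have "\<dots> = (\<Sum>c\<in>UNIV. u c * ?L (zs @ [c])) - ?L zs"
    using u1 by (simp add: right_diff_distrib sum_subtractf flip: sum_distrib_right)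
  finally show ?thesis .
qed

(* The hypothesis on \<kappa> says that u equals \<kappa> on the support of v. *)
lemma expected_lcs_gain:
  assumes u: "prob_weights u" and v: "prob_weights v" and \<kappa>: "\<And>d. u d * v d = \<kappa> * v d"
  shows "\<kappa> * (1 - (expected_lcs u v m (Suc n) - expected_lcs u v m n))
    \<le> expected_lcs u v (Suc m) (Suc n) - expected_lcs u v m (Suc n)"
proof -
  let ?L = "\<lambda>xs ys. real (lcs_length xs ys)"
  have u0: "\<And>c. 0 \<le> u c" and v0: "\<And>c. 0 \<le> v c"
    and u1: "sum u UNIV = 1" and v1: "sum v UNIV = 1"
    using u v by (auto simp: prob_weights_def)
  have weighted: "(\<Sum>d\<in>UNIV. v d * (u d * (1 + a - b d))) = \<kappa> * (1 + a - (\<Sum>d\<in>UNIV. v d * b d))"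
    for a b
  proof -
    have "(\<Sum>d\<in>UNIV. v d * (u d * (1 + a - b d))) = \<kappa> * (\<Sum>d\<in>UNIV. v d * (1 + a - b d))"
      unfolding sum_distrib_left by (intro sum.cong refl) (metis \<kappa> mult.assoc mult.commute)
    also have "(\<Sum>d\<in>UNIV. v d * (1 + a - b d)) = 1 + a - (\<Sum>d\<in>UNIV. v d * b d)"
      using v1 by (simp add: right_diff_distrib distrib_left sum.distrib sum_subtractf
          flip: sum_distrib_right)
    finally show ?thesis .
  qed
  have "\<kappa> * (1 - (expected_lcs u v m (Suc n) - expected_lcs u v m n))
      = word_expectation u m (\<lambda>zs. word_expectation v n (\<lambda>ws.
          \<Sum>d\<in>UNIV. v d * (u d * (1 + ?L zs ws - ?L zs (ws @ [d])))))"
    unfolding weighted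
    by (simp add: joint_expectation_def word_expectation_Suc_snoc word_expectation_linear
        word_expectation_const[OF u1] word_expectation_const[OF v1] right_diff_distrib distrib_left)
  also have "\<dots> \<le> word_expectation u m (\<lambda>zs. word_expectation v n (\<lambda>ws.
          \<Sum>d\<in>UNIV. v d * ((\<Sum>c\<in>UNIV. u c * ?L (zs @ [c]) (ws @ [d])) - ?L zs (ws @ [d]))))"
    using u0 v0 lcs_length_snoc_gain[OF u]
    by (intro word_expectation_mono sum_mono mult_left_mono) auto
  also have "\<dots> = expected_lcs u v (Suc m) (Suc n) - expected_lcs u v m (Suc n)"
    by (simp add: joint_expectation_def word_expectation_Suc_snoc word_expectation_linear
        right_diff_distrib sum_distrib_left sum_subtractf)
  finally show ?thesis .
qed

lemma expected_lcs_mult_count: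
  assumes "prob_weights u" and "v c = 0"
  shows "joint_expectation u v (Suc m) n (\<lambda>xs ys. real (lcs_length xs ys) * real (count_list xs c))
    = real (Suc m) * u c * expected_lcs u v m n"
proof -
  have "joint_expectation u v (Suc m) n (\<lambda>xs ys. real (lcs_length xs ys) * real (count_list xs c))
      = word_expectation u (Suc m)
          (\<lambda>xs. real (count_list xs c) * word_expectation v n (\<lambda>ys. real (lcs_length xs ys)))"
    by (simp add: joint_expectation_def word_expectation_mult_right mult.commute)
  also have "\<dots> = real (Suc m) * u c * expected_lcs u v m n"
    unfolding joint_expectation_def
  proof (rule word_expectation_count_mult, rule word_expectation_cong)
    fix as bs ys :: "'a list"
    assume "\<forall>y\<in>set ys. v y \<noteq> 0"
    then have "c \<notin> set ys"
      using \<open>v c = 0\<close> by auto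
    then show "real (lcs_length (as @ c # bs) ys) = real (lcs_length (as @ bs) ys)"
      by (simp add: lcs_length_remove_absent)
  qed
  finally show ?thesis .
qed

lemma expected_lcs_count_covariance:
  fixes m n :: nat
  assumes u: "prob_weights u" and v: "prob_weights v" and "v c = 0"
  defines "\<mu> \<equiv> expected_lcs u v (Suc m) n" and "\<rho> \<equiv> real (Suc m) * u c"
  shows "joint_expectation u v (Suc m) n
      (\<lambda>xs ys. (real (lcs_length xs ys) - \<mu>) * (real (count_list xs c) - \<rho>))
    = - (\<rho> * (\<mu> - expected_lcs u v m n))"
proof -
  have u1: "sum u UNIV = 1" and v1: "sum v UNIV = 1"
    using u v by (auto simp: prob_weights_def)
  have "joint_expectation u v (Suc m) n
      (\<lambda>xs ys. (real (lcs_length xs ys) - \<mu>) * (real (count_list xs c) - \<rho>))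
    = joint_expectation u v (Suc m) n (\<lambda>xs ys. real (lcs_length xs ys) * real (count_list xs c)
        - \<rho> * real (lcs_length xs ys) - \<mu> * real (count_list xs c) + \<mu> * \<rho>)"
    by (simp add: algebra_simps)
  also have "\<dots> = \<rho> * expected_lcs u v m n - \<rho> * \<mu> - \<mu> * \<rho> + \<mu> * \<rho>"
    unfolding expected_lcs_mult_count[where v = v and c = c, OF u \<open>v c = 0\<close>, symmetric] \<mu>_def \<rho>_def
    by (simp add: joint_expectation_def word_expectation_linear word_expectation_const[OF u1]
        word_expectation_const[OF v1] word_expectation_count[OF u1])
  finally show ?thesis
    by (simp add: algebra_simps)
qed

lemma expected_lcs_variance_ge:
  fixes m n :: nat
  assumes u: "prob_weights u" and v: "prob_weights v" and "v c = 0" and "0 < u c" and "u c < 1"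
  defines "\<mu> \<equiv> expected_lcs u v (Suc m) n"
  shows "real (Suc m) * u c / (1 - u c) * (\<mu> - expected_lcs u v m n)\<^sup>2
    \<le> joint_expectation u v (Suc m) n (\<lambda>xs ys. (real (lcs_length xs ys) - \<mu>)\<^sup>2)"
proof -
  define \<rho> where "\<rho> = real (Suc m) * u c"
  define V where "V = joint_expectation u v (Suc m) n (\<lambda>xs ys. (real (lcs_length xs ys) - \<mu>)\<^sup>2)"
  have u0: "\<And>c. 0 \<le> u c" and v0: "\<And>c. 0 \<le> v c"
    and u1: "sum u UNIV = 1" and v1: "sum v UNIV = 1"
    using u v by (auto simp: prob_weights_def)
  have var_count: "joint_expectation u v (Suc m) n (\<lambda>xs ys. (real (count_list xs c) - \<rho>)\<^sup>2)
      = \<rho> * (1 - u c)"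
    using word_expectation_count_variance[OF u1, of "Suc m" c]
    by (simp add: joint_expectation_def word_expectation_const[OF v1] \<rho>_def)
  have cov: "joint_expectation u v (Suc m) n
      (\<lambda>xs ys. (real (lcs_length xs ys) - \<mu>) * (real (count_list xs c) - \<rho>))
    = - (\<rho> * (\<mu> - expected_lcs u v m n))"
    unfolding \<mu>_def \<rho>_def by (rule expected_lcs_count_covariance[OF u v \<open>v c = 0\<close>])
  have CS: "(\<rho> * (\<mu> - expected_lcs u v m n))\<^sup>2 \<le> V * (\<rho> * (1 - u c))"
    using joint_expectation_Cauchy_Schwarz[where u = u and v = v and m = "Suc m" and n = n
        and a = "\<lambda>xs ys. real (lcs_length xs ys) - \<mu>"
        and b = "\<lambda>xs ys. real (count_list xs c) - \<rho>", OF u0 v0]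
    unfolding cov var_count V_def by simp
  have pos: "0 < \<rho> * (1 - u c)"
    using assms by (simp add: \<rho>_def)
  have "\<rho> / (1 - u c) * (\<mu> - expected_lcs u v m n)\<^sup>2
      = (\<rho> * (\<mu> - expected_lcs u v m n))\<^sup>2 / (\<rho> * (1 - u c))"
    using pos by (simp add: power2_eq_square)
  also have "\<dots> \<le> V"
    using CS pos by (simp add: pos_divide_le_eq)
  finally show ?thesis
    unfolding V_def \<rho>_def .
qed

section \<open>Expectations of functions of finitely many random letters\<close>

context prob_space
begin

lemma integral_finite_range:
  fixes V :: "'a \<Rightarrow> 'b" and f :: "'b \<Rightarrow> real"
  assumes "finite S" and "\<And>\<omega>. \<omega> \<in> space M \<Longrightarrow> V \<omega> \<in> S"
    and "\<And>s. {\<omega> \<in> space M. V \<omega> = s} \<in> events"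
  shows "(\<integral>\<omega>. f (V \<omega>) \<partial>M) = (\<Sum>s\<in>S. f s * prob {\<omega> \<in> space M. V \<omega> = s})"
proof -
  have "(\<integral>\<omega>. f (V \<omega>) \<partial>M) = (\<integral>\<omega>. (\<Sum>s\<in>S. f s * indicator {\<omega> \<in> space M. V \<omega> = s} \<omega>) \<partial>M)"
  proof (rule Bochner_Integration.integral_cong[OF refl])
    fix \<omega> assume \<omega>: "\<omega> \<in> space M"
    have "(\<Sum>s\<in>S. f s * indicator {\<omega> \<in> space M. V \<omega> = s} \<omega>) = (\<Sum>s\<in>S. if V \<omega> = s then f s else 0)"
      using \<omega> by (intro sum.cong) (auto simp: indicator_def)
    then show "f (V \<omega>) = (\<Sum>s\<in>S. f s * indicator {\<omega> \<in> space M. V \<omega> = s} \<omega>)"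
      using assms(1,2) \<omega> by simp
  qed
  also have "\<dots> = (\<Sum>s\<in>S. (\<integral>\<omega>. f s * indicator {\<omega> \<in> space M. V \<omega> = s} \<omega> \<partial>M))"
    by (intro Bochner_Integration.integral_sum integrable_mult_right integrable_real_indicator)
      (auto simp: assms(3) less_top[symmetric])
  also have "\<dots> = (\<Sum>s\<in>S. f s * prob {\<omega> \<in> space M. V \<omega> = s})"
    by (simp add: Int_absorb2)
  finally show ?thesis .
qed

lemma sum_prob_values_eq_1:
  fixes Z :: "'a \<Rightarrow> 'b::finite"
  assumes "Z \<in> measurable M (count_space UNIV)"
  shows "(\<Sum>c\<in>UNIV. prob {\<omega> \<in> space M. Z \<omega> = c}) = 1"
  using integral_finite_range[of UNIV Z "\<lambda>_. 1"] assms prob_space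
  by (simp add: measurable_count_space_eq2_countable)

lemma prob_prefixes_eq:
  fixes X Y :: "nat \<Rightarrow> 'a \<Rightarrow> 'b"
  assumes indep: "indep_vars (\<lambda>_. count_space UNIV) (\<lambda>j. case j of Inl i \<Rightarrow> X i | Inr i \<Rightarrow> Y i) UNIV"
    and "length xs = m" and "length ys = n"
  shows "prob {\<omega> \<in> space M. map (\<lambda>i. X i \<omega>) [0..<m] = xs \<and> map (\<lambda>i. Y i \<omega>) [0..<n] = ys}
    = (\<Prod>i<m. prob {\<omega> \<in> space M. X i \<omega> = xs ! i}) * (\<Prod>i<n. prob {\<omega> \<in> space M. Y i \<omega> = ys ! i})"
proof (cases "m = 0 \<and> n = 0")
  case True
  then show ?thesis using assms(2,3) prob_space by simp
next
  case False
  define Z where "Z = (\<lambda>j. case j of Inl i \<Rightarrow> X i | Inr i \<Rightarrow> Y i)"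
  define a where "a j = (case j of Inl i \<Rightarrow> xs ! i | Inr i \<Rightarrow> ys ! i)" for j
  define J where "J = Inl ` {..<m} \<union> Inr ` {..<n}"
  have "J \<noteq> {}" "finite J"
    using False by (auto simp: J_def)
  have "{\<omega> \<in> space M. map (\<lambda>i. X i \<omega>) [0..<m] = xs \<and> map (\<lambda>i. Y i \<omega>) [0..<n] = ys}
      = {\<omega> \<in> space M. (\<forall>i<m. X i \<omega> = xs ! i) \<and> (\<forall>i<n. Y i \<omega> = ys ! i)}"
    using assms(2,3) by (auto simp: list_eq_iff_nth_eq)
  also have "\<dots> = (\<Inter>j\<in>J. Z j -` {a j} \<inter> space M)"
    using \<open>J \<noteq> {}\<close> by (auto simp: J_def Z_def a_def ball_Un)
  also have "prob \<dots> = (\<Prod>j\<in>J. prob (Z j -` {a j} \<inter> space M))"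
    using indep \<open>J \<noteq> {}\<close> \<open>finite J\<close> unfolding Z_def by (intro indep_varsD) auto
  also have "\<dots> = (\<Prod>i<m. prob {\<omega> \<in> space M. X i \<omega> = xs ! i})
      * (\<Prod>i<n. prob {\<omega> \<in> space M. Y i \<omega> = ys ! i})"
    unfolding J_def
    by (subst prod.union_disjoint)
      (auto simp: prod.reindex Z_def a_def vimage_def Int_def conj_commute)
  finally show ?thesis .
qed

lemma expectation_prefixes_eq_joint_expectation:
  fixes X Y :: "nat \<Rightarrow> 'a \<Rightarrow> 'b::finite"
  assumes X: "\<And>i. X i \<in> measurable M (count_space UNIV)"
    and Y: "\<And>i. Y i \<in> measurable M (count_space UNIV)"
    and indep: "indep_vars (\<lambda>_. count_space UNIV) (\<lambda>j. case j of Inl i \<Rightarrow> X i | Inr i \<Rightarrow> Y i) UNIV"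
    and law_X: "\<And>i c. prob {\<omega> \<in> space M. X i \<omega> = c} = u c"
    and law_Y: "\<And>i c. prob {\<omega> \<in> space M. Y i \<omega> = c} = v c"
  shows "(\<integral>\<omega>. f (map (\<lambda>i. X i \<omega>) [0..<m]) (map (\<lambda>i. Y i \<omega>) [0..<n]) \<partial>M)
    = joint_expectation u v m n f"
proof -
  define V where "V \<omega> = (map (\<lambda>i. X i \<omega>) [0..<m], map (\<lambda>i. Y i \<omega>) [0..<n])" for \<omega>
  note [measurable] = X Y
  have events: "{\<omega> \<in> space M. V \<omega> = s} \<in> events" for s
  proof -
    have "{\<omega> \<in> space M. V \<omega> = s} = {\<omega> \<in> space M. length (fst s) = m \<and> length (snd s) = n \<and>
        (\<forall>i<m. X i \<omega> = fst s ! i) \<and> (\<forall>i<n. Y i \<omega> = snd s ! i)}"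
      by (cases s) (auto simp: V_def list_eq_iff_nth_eq)
    also have "\<dots> \<in> events"
      by measurable
    finally show ?thesis .
  qed
  have "(\<integral>\<omega>. f (map (\<lambda>i. X i \<omega>) [0..<m]) (map (\<lambda>i. Y i \<omega>) [0..<n]) \<partial>M)
      = (\<Sum>s \<in> {xs. length xs = m} \<times> {ys. length ys = n}.
          case_prod f s * prob {\<omega> \<in> space M. V \<omega> = s})"
    using integral_finite_range[of "{xs. length xs = m} \<times> {ys. length ys = n}" V "case_prod f"]
      events
    by (simp add: V_def finite_lists_of_length)
  also have "\<dots> = joint_expectation u v m n f"
    unfolding joint_expectation_eq_sum
    by (intro sum.cong refl)
      (auto simp: V_def prob_prefixes_eq[OF indep] law_X law_Y prod.list_conv_set_nth
        atLeast0LessThan)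
  finally show ?thesis .
qed

end

section \<open>The alphabet {0, 1, a}\<close>

lemma UNIV_letter: "(UNIV :: letter set) = {Zero, One, A}"
  using letter.exhaust by auto

instance letter :: finite
  by standard (simp add: UNIV_letter)

lemma sum_UNIV_letter: "sum f (UNIV :: letter set) = f Zero + f One + f A"
  by (simp add: UNIV_letter add.assoc)

definition law_X :: "real \<Rightarrow> letter \<Rightarrow> real" where
  "law_X p c = (if c = A then p else (1 - p) / 2)"

definition law_Y :: "letter \<Rightarrow> real" where
  "law_Y c = (if c = A then 0 else 1 / 2)"

lemma prob_weights_law_X: "0 \<le> p \<Longrightarrow> p \<le> 1 \<Longrightarrow> prob_weights (law_X p)"
  by (simp add: prob_weights_def law_X_def sum_UNIV_letter)

lemma prob_weights_law_Y: "prob_weights law_Y"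
  by (simp add: prob_weights_def law_Y_def sum_UNIV_letter)

lemma (in prob_space) prob_eq_law_Y:
  assumes "Z \<in> measurable M (count_space UNIV)"
    and "prob {\<omega> \<in> space M. Z \<omega> = Zero} = 1 / 2" and "prob {\<omega> \<in> space M. Z \<omega> = One} = 1 / 2"
  shows "prob {\<omega> \<in> space M. Z \<omega> = c} = law_Y c"
proof (cases c)
  case A
  have "prob {\<omega> \<in> space M. Z \<omega> = Zero} + prob {\<omega> \<in> space M. Z \<omega> = One}
      + prob {\<omega> \<in> space M. Z \<omega> = A} = 1"
    using sum_prob_values_eq_1[OF assms(1)] by (simp add: sum_UNIV_letter)
  then show ?thesis
    using assms(2,3) A by (simp add: law_Y_def)
qed (use assms(2,3) in \<open>simp_all add: law_Y_def\<close>)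

lemma lcs_variance_letters_ge:
  assumes "0 < p" and "p < 1"
  shows "p ^ 3 * (1 - p) / 4 * real n
    \<le> joint_expectation (law_X p) law_Y n n
         (\<lambda>xs ys. (real (lcs_length xs ys) - expected_lcs (law_X p) law_Y n n)\<^sup>2)"
proof (cases n)
  case 0
  then show ?thesis by (simp add: joint_expectation_def)
next
  case (Suc m)
  let ?E = "expected_lcs (law_X p) law_Y"
  let ?\<Delta> = "?E (Suc m) (Suc m) - ?E m (Suc m)"
  have X: "prob_weights (law_X p)" and Y: "prob_weights law_Y"
    using assms by (simp_all add: prob_weights_law_X prob_weights_law_Y)
  have X_A: "law_X p A = p" and Y_A: "law_Y A = 0"
    by (simp_all add: law_X_def law_Y_def)
  have "(1 - p) / 2 * p \<le> (1 - p) / 2 * (1 - (?E m (Suc m) - ?E m m))"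
    using expected_lcs_increment_le[OF X Y Y_A, of m] assms
    by (intro mult_left_mono) (auto simp: X_A)
  also have "\<dots> \<le> ?\<Delta>"
    by (rule expected_lcs_gain[OF X Y]) (simp add: law_X_def law_Y_def)
  finally have "(p * (1 - p) / 2)\<^sup>2 \<le> ?\<Delta>\<^sup>2"
    using assms by (intro power_mono) (auto simp: mult.commute)
  then have "real (Suc m) * p / (1 - p) * (p * (1 - p) / 2)\<^sup>2 \<le> real (Suc m) * p / (1 - p) * ?\<Delta>\<^sup>2"
    using assms by (intro mult_left_mono) auto
  moreover have "p ^ 3 * (1 - p) / 4 * real n = real (Suc m) * p / (1 - p) * (p * (1 - p) / 2)\<^sup>2"
    using assms Suc by (simp add: power2_eq_square power3_eq_cube field_simps)
  moreover have "real (Suc m) * p / (1 - p) * ?\<Delta>\<^sup>2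
      \<le> joint_expectation (law_X p) law_Y n n (\<lambda>xs ys. (real (lcs_length xs ys) - ?E n n)\<^sup>2)"
    using expected_lcs_variance_ge[OF X Y Y_A, of m "Suc m"] assms Suc by (simp add: X_A)
  ultimately show ?thesis by linarith
qed

theorem theorem1:
  fixes M :: "'w measure" and p :: real
    and X Y :: "nat \<Rightarrow> 'w \<Rightarrow> letter"
  assumes "prob_space M"
    and "0 < p" and "p < 1"
    and "\<And>i. X i \<in> measurable M (count_space UNIV)"
    and "\<And>i. Y i \<in> measurable M (count_space UNIV)"
    and "prob_space.indep_vars M (\<lambda>_. count_space UNIV)
           (\<lambda>j. case j of Inl i \<Rightarrow> X i | Inr i \<Rightarrow> Y i) UNIV"
    and "\<And>i. measure M {\<omega> \<in> space M. X i \<omega> = A} = p"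
    and "\<And>i. measure M {\<omega> \<in> space M. X i \<omega> = Zero} = (1 - p) / 2"
    and "\<And>i. measure M {\<omega> \<in> space M. X i \<omega> = One} = (1 - p) / 2"
    and "\<And>i. measure M {\<omega> \<in> space M. Y i \<omega> = Zero} = 1 / 2"
    and "\<And>i. measure M {\<omega> \<in> space M. Y i \<omega> = One} = 1 / 2"
  shows "\<exists>k>0. \<forall>n::nat.
    (let L = (\<lambda>\<omega>. real (lcs_length (map (\<lambda>i. X i \<omega>) [0..<n]) (map (\<lambda>i. Y i \<omega>) [0..<n])))
     in (LINT \<omega>|M. (L \<omega> - (LINT \<omega>|M. L \<omega>))\<^sup>2) \<ge> k * real n)"
proof -
  interpret prob_space M by fact
  have law_X: "prob {\<omega> \<in> space M. X i \<omega> = c} = law_X p c" for i c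
    using assms(7-9) by (cases c) (simp_all add: law_X_def)
  have law_Y: "prob {\<omega> \<in> space M. Y i \<omega> = c} = law_Y c" for i c
    using prob_eq_law_Y[OF assms(5,10,11)] .
  note expectation = expectation_prefixes_eq_joint_expectation[OF assms(4,5,6) law_X law_Y]
  let ?L = "\<lambda>n \<omega>. real (lcs_length (map (\<lambda>i. X i \<omega>) [0..<n]) (map (\<lambda>i. Y i \<omega>) [0..<n]))"
  let ?E = "\<lambda>n. expected_lcs (law_X p) law_Y n n"
  have "p ^ 3 * (1 - p) / 4 * real n \<le> (LINT \<omega>|M. (?L n \<omega> - (LINT \<omega>|M. ?L n \<omega>))\<^sup>2)" for n
    using lcs_variance_letters_ge[OF assms(2,3), of n]
      expectation[where f = "\<lambda>xs ys. real (lcs_length xs ys)"]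
      expectation[where f = "\<lambda>xs ys. (real (lcs_length xs ys) - ?E n)\<^sup>2"]
    by simp
  then show ?thesis
    using assms(2,3) by (intro exI[of _ "p ^ 3 * (1 - p) / 4"]) (simp add: Let_def)
qed

end
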